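(* Let $ABC$ be a triangle with incenter $I$, and let $H_A, H_B, H_C$ be the orthocenters of the triangles $BIC$, $CIA$, $AIB$ respectively. Then the triangles $AH_BH_C$, $BH_CH_A$, $CH_AH_B$ have a common orthocenter, namely the Nagel point $N_a$ of $ABC$.
   Context: The Nagel point of $ABC$ is the common point of the lines joining each vertex to the point where the excircle opposite that vertex touches the opposite side. *)

theory Defs
  imports "HOL-Analysis.Analysis"
begin

type_synonym point = "real^2"

definition nondegenerate_triangle :: "point \<Rightarrow> point \<Rightarrow> point \<Rightarrow> bool" where
  "nondegenerate_triangle A B C \<longleftrightarrow> \<not> collinear {A, B, C}"

definition incenter :: "point \<Rightarrow> point \<Rightarrow> point \<Rightarrow> point" where
  "incenter A B C =
     (let a = dist B C; b = dist C A; c = dist A B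
      in (1 / (a + b + c)) *\<^sub>R (a *\<^sub>R A + b *\<^sub>R B + c *\<^sub>R C))"

definition is_orthocenter :: "point \<Rightarrow> point \<Rightarrow> point \<Rightarrow> point \<Rightarrow> bool" where
  "is_orthocenter H P Q R \<longleftrightarrow>
     (H - P) \<bullet> (Q - R) = 0 \<and> (H - Q) \<bullet> (R - P) = 0 \<and> (H - R) \<bullet> (P - Q) = 0"

definition excenter :: "point \<Rightarrow> point \<Rightarrow> point \<Rightarrow> point" where
  "excenter A B C =
     (let a = dist B C; b = dist C A; c = dist A B
      in (1 / (- a + b + c)) *\<^sub>R ((- a) *\<^sub>R A + b *\<^sub>R B + c *\<^sub>R C))"

definition excircle_touch :: "point \<Rightarrow> point \<Rightarrow> point \<Rightarrow> point" where
  "excircle_touch A B C =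
     (let J = excenter A B C
      in B + (((J - B) \<bullet> (C - B)) / ((C - B) \<bullet> (C - B))) *\<^sub>R (C - B))"

definition is_nagel_point :: "point \<Rightarrow> point \<Rightarrow> point \<Rightarrow> point \<Rightarrow> bool" where
  "is_nagel_point N A B C \<longleftrightarrow>
     collinear {A, excircle_touch A B C, N} \<and>
     collinear {B, excircle_touch B C A, N} \<and>
     collinear {C, excircle_touch C A B, N}"

end

theory Submission
  imports Defs
begin

text \<open>
  Work in barycentric coordinates with respect to \<open>A B C\<close>, with side lengths \<open>a b c\<close>.
  Then \<open>I = (a : b : c)\<close>, the orthocenter of \<open>B I C\<close> is \<open>H\<^sub>A = (a : c - a : b - a)\<close> (cyclically for
  \<open>H\<^sub>B, H\<^sub>C\<close>), the excircle opposite \<open>A\<close> touches \<open>BC\<close> at \<open>(0 : a - b + c : a + b - c)\<close>, and hence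
  the Nagel point is \<open>(b + c - a : c + a - b : a + b - c)\<close>.  For two displacement vectors with
  weights \<open>(x, y, z)\<close>, \<open>(x', y', z')\<close> summing to zero the inner product is
  \<open>-(a\<^sup>2(yz' + zy') + b\<^sup>2(zx' + xz') + c\<^sup>2(xy' + yx'))/2\<close>, so after clearing denominators every
  perpendicularity needed is a polynomial identity in \<open>a, b, c\<close>.  The given points are identified
  with these formulas because in the plane an orthocenter is unique and two distinct cevians meet
  in a single point.
\<close>

text \<open>Normalises homogeneous coordinates \<open>(x : y : z)\<close>; junk value \<open>0\<close> when \<open>x + y + z = 0\<close>.\<close>
definition barycentric :: "real \<Rightarrow> real \<Rightarrow> real \<Rightarrow> 'a \<Rightarrow> 'a \<Rightarrow> 'a \<Rightarrow> 'a::real_vector" where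
  "barycentric x y z A B C = (1 / (x + y + z)) *\<^sub>R (x *\<^sub>R A + y *\<^sub>R B + z *\<^sub>R C)"

lemma barycentric_rotate: "barycentric x y z A B C = barycentric y z x B C A"
  by (simp add: barycentric_def algebra_simps)

lemma barycentric_vertices:
  "barycentric 1 0 0 A B C = A" "barycentric 0 1 0 A B C = B" "barycentric 0 0 1 A B C = C"
  by (simp_all add: barycentric_def)

definition displacement_form ::
    "real \<Rightarrow> real \<Rightarrow> real \<Rightarrow> real \<Rightarrow> real \<Rightarrow> real \<Rightarrow> real \<Rightarrow> real \<Rightarrow> real \<Rightarrow> real" where
  "displacement_form a b c x y z x' y' z' =
     a\<^sup>2 * (y * z' + z * y') + b\<^sup>2 * (z * x' + x * z') + c\<^sup>2 * (x * y' + y * x')"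

lemma inner_displacement:
  fixes A B C :: "'a::real_inner"
  assumes "x + y + z = 0" "x' + y' + z' = 0"
  shows "(x *\<^sub>R A + y *\<^sub>R B + z *\<^sub>R C) \<bullet> (x' *\<^sub>R A + y' *\<^sub>R B + z' *\<^sub>R C) =
    - displacement_form (dist B C) (dist C A) (dist A B) x y z x' y' z' / 2"
proof -
  have x: "x = - y - z" and x': "x' = - y' - z'" using assms by linarith+
  show ?thesis
    unfolding x x' displacement_form_def dist_norm power2_norm_eq_inner
    by (simp add: inner_commute algebra_simps)
qed

lemma scaleR_barycentric_diff:
  assumes "x + y + z = s" "x' + y' + z' = s'" "s \<noteq> 0" "s' \<noteq> 0"
  shows "(s * s') *\<^sub>R (barycentric x y z A B C - barycentric x' y' z' A B C) =
    (s' * x - s * x') *\<^sub>R A + (s' * y - s * y') *\<^sub>R B + (s' * z - s * z') *\<^sub>R C"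
  using assms by (simp add: barycentric_def algebra_simps)

lemma barycentric_diff_orthogonal:
  fixes A B C :: "'a::real_inner" and x1 y1 z1 x2 y2 z2 x3 y3 z3 x4 y4 z4 :: real
  defines "s1 \<equiv> x1 + y1 + z1" and "s2 \<equiv> x2 + y2 + z2"
    and "s3 \<equiv> x3 + y3 + z3" and "s4 \<equiv> x4 + y4 + z4"
  assumes "s1 \<noteq> 0" "s2 \<noteq> 0" "s3 \<noteq> 0" "s4 \<noteq> 0"
    and "displacement_form (dist B C) (dist C A) (dist A B)
           (s2 * x1 - s1 * x2) (s2 * y1 - s1 * y2) (s2 * z1 - s1 * z2)
           (s4 * x3 - s3 * x4) (s4 * y3 - s3 * y4) (s4 * z3 - s3 * z4) = 0"
  shows "(barycentric x1 y1 z1 A B C - barycentric x2 y2 z2 A B C) \<bullet>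
         (barycentric x3 y3 z3 A B C - barycentric x4 y4 z4 A B C) = 0"
proof -
  let ?P12 = "barycentric x1 y1 z1 A B C - barycentric x2 y2 z2 A B C"
  let ?P34 = "barycentric x3 y3 z3 A B C - barycentric x4 y4 z4 A B C"
  have P12: "(s1 * s2) *\<^sub>R ?P12 =
      (s2 * x1 - s1 * x2) *\<^sub>R A + (s2 * y1 - s1 * y2) *\<^sub>R B + (s2 * z1 - s1 * z2) *\<^sub>R C"
    using assms(5,6) unfolding s1_def s2_def by (rule scaleR_barycentric_diff[OF refl refl])
  have P34: "(s3 * s4) *\<^sub>R ?P34 =
      (s4 * x3 - s3 * x4) *\<^sub>R A + (s4 * y3 - s3 * y4) *\<^sub>R B + (s4 * z3 - s3 * z4) *\<^sub>R C"
    using assms(7,8) unfolding s3_def s4_def by (rule scaleR_barycentric_diff[OF refl refl])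
  have "(s1 * s2 * (s3 * s4)) * (?P12 \<bullet> ?P34) = ((s1 * s2) *\<^sub>R ?P12) \<bullet> ((s3 * s4) *\<^sub>R ?P34)"
    by simp
  also have "\<dots> = - displacement_form (dist B C) (dist C A) (dist A B)
           (s2 * x1 - s1 * x2) (s2 * y1 - s1 * y2) (s2 * z1 - s1 * z2)
           (s4 * x3 - s3 * x4) (s4 * y3 - s3 * y4) (s4 * z3 - s3 * z4) / 2"
    unfolding P12 P34 by (rule inner_displacement) (simp_all add: s1_def s2_def s3_def s4_def algebra_simps)
  also have "\<dots> = 0"
    using assms(9) by simp
  finally show ?thesis using assms(5-8) by simp
qed

lemma dist_lt_add_dist_noncollinear:
  fixes A B C :: "'a::real_inner"
  assumes "\<not> collinear {A, B, C}"
  shows "dist B C < dist C A + dist A B"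
proof -
  have "norm ((B - A) + (A - C)) \<noteq> norm (B - A) + norm (A - C)"
  proof
    assume "norm ((B - A) + (A - C)) = norm (B - A) + norm (A - C)"
    then have "collinear {0, B - A, A - C}"
      by (rule norm_triangle_eq_imp_collinear)
    then have "collinear {B, A, C}"
      by (subst collinear_3) (auto simp: collinear_lemma, metis minus_diff_eq scaleR_minus_left)
    with assms show False
      by (simp add: insert_commute)
  qed
  moreover have "norm ((B - A) + (A - C)) \<le> norm (B - A) + norm (A - C)"
    by (rule norm_triangle_ineq)
  ultimately show ?thesis
    by (simp add: dist_norm norm_minus_commute add.commute)
qed

lemma orthogonal_triangle_sides_eq_0:
  fixes P Q R w :: "'a::euclidean_space"
  assumes "DIM('a) = 2" "\<not> collinear {P, Q, R}" "w \<bullet> (Q - P) = 0" "w \<bullet> (R - P) = 0"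
  shows "w = 0"
proof (rule ccontr)
  assume "w \<noteq> 0"
  have "aff_dim {0, Q - P, R - P} \<le> aff_dim {x. w \<bullet> x = 0}"
    using assms(3,4) by (intro aff_dim_subset) auto
  also have "\<dots> = 1"
    using \<open>w \<noteq> 0\<close> assms(1) by (simp add: aff_dim_subspace subspace_hyperplane dim_hyperplane)
  finally have "collinear {Q, P, R}"
    by (subst collinear_3) (simp_all add: collinear_aff_dim)
  with assms(2) show False
    by (simp add: insert_commute)
qed

lemma is_orthocenter_unique:
  assumes "\<not> collinear {P, Q, R}" "is_orthocenter H P Q R" "is_orthocenter H' P Q R"
  shows "H = H'"
proof -
  have "(H - H') \<bullet> (Q - R) = 0" "(H - H') \<bullet> (P - R) = 0"
    using assms(2,3) unfolding is_orthocenter_def by (simp_all add: inner_diff_left inner_diff_right)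
  moreover have "\<not> collinear {R, Q, P}"
    using assms(1) by (simp add: insert_commute)
  ultimately have "H - H' = 0"
    using orthogonal_triangle_sides_eq_0[of R Q P "H - H'"] by simp
  then show ?thesis
    by simp
qed

lemma barycentric_not_collinear_side:
  fixes A B C :: "'a::real_vector"
  assumes "\<not> collinear {A, B, C}" "x \<noteq> 0" "x + y + z \<noteq> 0"
  shows "\<not> collinear {barycentric x y z A B C, B, C}"
proof
  let ?P = "barycentric x y z A B C"
  assume "collinear {?P, B, C}"
  moreover have "B \<noteq> C"
    using assms(1) by auto
  ultimately have "?P \<in> affine hull {B, C}"
    using collinear_3_imp_in_affine_hull[of B C ?P] by (simp add: insert_commute)
  then have "((x + y + z) / x) *\<^sub>R ?P + (- y / x) *\<^sub>R B + (- z / x) *\<^sub>R C \<in> affine hull {B, C}"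
    using assms(2) by (intro mem_affine_3) (auto simp: hull_inc field_simps)
  moreover have "((x + y + z) / x) *\<^sub>R ?P = (1 / x) *\<^sub>R (x *\<^sub>R A + y *\<^sub>R B + z *\<^sub>R C)"
    using assms(3) by (simp add: barycentric_def)
  then have "((x + y + z) / x) *\<^sub>R ?P + (- y / x) *\<^sub>R B + (- z / x) *\<^sub>R C = A"
    using assms(2) by (simp add: scaleR_add_right)
  ultimately have "collinear {B, C, A}"
    by (metis affine_hull_3_imp_collinear)
  with assms(1) show False
    by (simp add: insert_commute)
qed

lemma triangle_inequalities_strict:
  fixes A B C :: "'a::real_inner"
  assumes "\<not> collinear {A, B, C}"
  shows "dist B C < dist C A + dist A B" "dist C A < dist A B + dist B C" "dist A B < dist B C + dist C A"
  using dist_lt_add_dist_noncollinear[of A B C] dist_lt_add_dist_noncollinear[of B C A]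
    dist_lt_add_dist_noncollinear[of C A B] assms
  by (simp_all add: insert_commute)

lemma incenter_eq_barycentric: "incenter A B C = barycentric (dist B C) (dist C A) (dist A B) A B C"
  by (simp add: incenter_def barycentric_def Let_def)

lemma is_orthocenter_incenter_side_eq:
  fixes A B C H :: point
  defines "a \<equiv> dist B C" and "b \<equiv> dist C A" and "c \<equiv> dist A B"
  assumes "\<not> collinear {A, B, C}" "is_orthocenter H B (incenter A B C) C"
  shows "H = barycentric a (c - a) (b - a) A B C"
proof -
  let ?I = "barycentric a b c A B C"
  let ?H = "barycentric a (c - a) (b - a) A B C"
  have sides: "a < b + c" "b < c + a" "c < a + b"
    using triangle_inequalities_strict[OF assms(4)] unfolding a_def b_def c_def by simp_all
  have "(?H - barycentric 0 1 0 A B C) \<bullet> (?I - barycentric 0 0 1 A B C) = 0"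
    "(?H - ?I) \<bullet> (barycentric 0 0 1 A B C - barycentric 0 1 0 A B C) = 0"
    "(?H - barycentric 0 0 1 A B C) \<bullet> (barycentric 0 1 0 A B C - ?I) = 0"
    by (rule barycentric_diff_orthogonal;
        use sides in \<open>simp add: displacement_form_def algebra_simps power2_eq_square flip: a_def b_def c_def\<close>)+
  then have "is_orthocenter ?H B ?I C"
    by (simp add: is_orthocenter_def barycentric_vertices)
  moreover have "\<not> collinear {B, ?I, C}"
    using barycentric_not_collinear_side[OF assms(4), of a b c] sides
    by (simp add: insert_commute)
  ultimately show ?thesis
    using assms(5) is_orthocenter_unique by (metis incenter_eq_barycentric a_def b_def c_def)
qed

lemma barycentric_side_eq:
  fixes A B C :: "'a::real_vector"
  assumes "y + z \<noteq> 0"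
  shows "barycentric 0 y z A B C = B + (z / (y + z)) *\<^sub>R (C - B)"
proof -
  have "barycentric 0 y z A B C = (y / (y + z)) *\<^sub>R B + (z / (y + z)) *\<^sub>R C"
    by (simp add: barycentric_def scaleR_add_right)
  also have "\<dots> = B + (z / (y + z)) *\<^sub>R (C - B)"
    using assms by (simp add: algebra_simps add_divide_distrib[symmetric] flip: scaleR_add_left)
  finally show ?thesis .
qed

lemma collinear_cevian_barycentric:
  fixes A B C :: "'a::real_vector"
  assumes "y + z \<noteq> 0" "x + y + z \<noteq> 0"
  shows "collinear {A, barycentric 0 y z A B C, barycentric x y z A B C}"
proof -
  let ?T = "barycentric 0 y z A B C"
  have "barycentric x y z A B C = (x / (x + y + z)) *\<^sub>R A + ((y + z) / (x + y + z)) *\<^sub>R ?T"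
    using assms by (simp add: barycentric_def scaleR_add_right divide_simps)
  also have "\<dots> \<in> affine hull {A, ?T}"
    using assms(2) by (intro mem_affine) (auto simp: hull_inc add_divide_distrib[symmetric])
  finally show ?thesis
    by (rule affine_hull_3_imp_collinear)
qed

lemma eq_of_collinear_two_lines:
  fixes A B P Q X Y :: "'a::real_vector"
  assumes "\<not> collinear {A, P, B}" "B \<noteq> Q"
    and "collinear {A, P, X}" "collinear {A, P, Y}" "collinear {B, Q, X}" "collinear {B, Q, Y}"
  shows "X = Y"
proof (rule ccontr)
  assume "X \<noteq> Y"
  have "A \<noteq> P"
    using assms(1) by auto
  then have "collinear {A, P, X, Y}"
    using assms(3,4) by (intro collinear_4_3[THEN iffD2]) auto
  then have "collinear {X, Y, A}" "collinear {X, Y, P}"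
    by (rule collinear_subset, blast)+
  moreover have "collinear {B, Q, X, Y}"
    using assms(2,5,6) by (intro collinear_4_3[THEN iffD2]) auto
  then have "collinear {X, Y, B}"
    by (rule collinear_subset) blast
  ultimately have "collinear {X, Y, A, P, B}"
    using \<open>X \<noteq> Y\<close> by (intro collinear_triples[THEN iffD2]) auto
  then have "collinear {A, P, B}"
    by (rule collinear_subset) blast
  with assms(1) show False ..
qed

lemma projection_coefficient_eq:
  fixes B C J :: "'a::real_inner"
  assumes "B \<noteq> C" "(J - (B + t *\<^sub>R (C - B))) \<bullet> (C - B) = 0"
  shows "((J - B) \<bullet> (C - B)) / ((C - B) \<bullet> (C - B)) = t"
proof -
  have "(J - B) \<bullet> (C - B) = t * ((C - B) \<bullet> (C - B))"
    using assms(2) by (simp add: algebra_simps)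
  then show ?thesis
    using assms(1) by simp
qed

lemma excircle_touch_eq_barycentric:
  fixes A B C :: point
  defines "a \<equiv> dist B C" and "b \<equiv> dist C A" and "c \<equiv> dist A B"
  assumes "\<not> collinear {A, B, C}"
  shows "excircle_touch A B C = barycentric 0 (a - b + c) (a + b - c) A B C"
proof -
  let ?J = "barycentric (- a) b c A B C"
  let ?T = "barycentric 0 (a - b + c) (a + b - c) A B C"
  let ?t = "(a + b - c) / ((a - b + c) + (a + b - c))"
  have sides: "a < b + c" "b < c + a" "c < a + b"
    using triangle_inequalities_strict[OF assms(4)] unfolding a_def b_def c_def by simp_all
  have "excenter A B C = ?J"
    by (simp add: excenter_def barycentric_def Let_def a_def b_def c_def)
  moreover have T: "?T = B + ?t *\<^sub>R (C - B)"
    using sides by (intro barycentric_side_eq) simp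
  moreover have "(?J - ?T) \<bullet> (barycentric 0 0 1 A B C - barycentric 0 1 0 A B C) = 0"
    by (rule barycentric_diff_orthogonal;
        use sides in \<open>simp add: displacement_form_def algebra_simps power2_eq_square flip: a_def b_def c_def\<close>)
  then have "(?J - (B + ?t *\<^sub>R (C - B))) \<bullet> (C - B) = 0"
    by (simp add: T barycentric_vertices)
  moreover have "B \<noteq> C"
    using assms(4) by auto
  ultimately show ?thesis
    unfolding excircle_touch_def Let_def by (simp add: projection_coefficient_eq)
qed

lemma is_nagel_point_eq_barycentric:
  fixes A B C N :: point
  defines "a \<equiv> dist B C" and "b \<equiv> dist C A" and "c \<equiv> dist A B"
  assumes "\<not> collinear {A, B, C}" "is_nagel_point N A B C"
  shows "N = barycentric (b + c - a) (c + a - b) (a + b - c) A B C"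
proof -
  let ?N = "barycentric (b + c - a) (c + a - b) (a + b - c) A B C"
  have sides: "a < b + c" "b < c + a" "c < a + b"
    using triangle_inequalities_strict[OF assms(4)] unfolding a_def b_def c_def by simp_all
  have "\<not> collinear {B, C, A}" "\<not> collinear {C, A, B}"
    using assms(4) by (simp_all add: insert_commute)
  have TA: "excircle_touch A B C = barycentric 0 (c + a - b) (a + b - c) A B C"
    using excircle_touch_eq_barycentric[OF assms(4)] by (simp add: a_def b_def c_def algebra_simps)
  have TB: "excircle_touch B C A = barycentric 0 (a + b - c) (b + c - a) B C A"
    using excircle_touch_eq_barycentric[OF \<open>\<not> collinear {B, C, A}\<close>]
    by (simp add: a_def b_def c_def algebra_simps)
  have "collinear {A, excircle_touch A B C, ?N}"
    unfolding TA using sides by (intro collinear_cevian_barycentric) simp_all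
  moreover have "collinear {B, excircle_touch B C A, ?N}"
    unfolding TB barycentric_rotate[of _ _ _ A B C] using sides
    by (intro collinear_cevian_barycentric) simp_all
  moreover have "\<not> collinear {A, excircle_touch A B C, B}"
    using barycentric_not_collinear_side[OF \<open>\<not> collinear {C, A, B}\<close>, of "a + b - c" 0 "c + a - b"] sides
    by (simp add: TA barycentric_rotate[of _ _ _ C A B] insert_commute)
  moreover have "B \<noteq> excircle_touch B C A"
    using barycentric_not_collinear_side[OF assms(4), of "b + c - a" 0 "a + b - c"] sides
    by (auto simp: TB barycentric_rotate[of _ _ _ A B C])
  ultimately show ?thesis
    using assms(5) unfolding is_nagel_point_def
    by (intro eq_of_collinear_two_lines[of A "excircle_touch A B C" B "excircle_touch B C A"]) simp_all
qed

lemma is_orthocenter_nagel_barycentric: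
  fixes A B C :: point
  defines "a \<equiv> dist B C" and "b \<equiv> dist C A" and "c \<equiv> dist A B"
  defines "N \<equiv> barycentric (b + c - a) (c + a - b) (a + b - c) A B C"
    and "HA \<equiv> barycentric a (c - a) (b - a) A B C"
    and "HB \<equiv> barycentric (c - b) b (a - b) A B C"
    and "HC \<equiv> barycentric (b - c) (a - c) c A B C"
  assumes "\<not> collinear {A, B, C}"
  shows "is_orthocenter N A HB HC \<and> is_orthocenter N B HC HA \<and> is_orthocenter N C HA HB"
proof -
  have sides: "a < b + c" "b < c + a" "c < a + b"
    using triangle_inequalities_strict[OF assms(8)] unfolding a_def b_def c_def by simp_all
  let ?A = "barycentric 1 0 0 A B C" and ?B = "barycentric 0 1 0 A B C" and ?C = "barycentric 0 0 1 A B C"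
  have "(N - ?A) \<bullet> (HB - HC) = 0" "(N - HB) \<bullet> (HC - ?A) = 0" "(N - HC) \<bullet> (?A - HB) = 0"
    "(N - ?B) \<bullet> (HC - HA) = 0" "(N - HC) \<bullet> (HA - ?B) = 0" "(N - HA) \<bullet> (?B - HC) = 0"
    "(N - ?C) \<bullet> (HA - HB) = 0" "(N - HA) \<bullet> (HB - ?C) = 0" "(N - HB) \<bullet> (?C - HA) = 0"
    unfolding N_def HA_def HB_def HC_def
    by (rule barycentric_diff_orthogonal;
        use sides in \<open>simp add: displacement_form_def algebra_simps power2_eq_square flip: a_def b_def c_def\<close>)+
  then show ?thesis
    by (simp add: is_orthocenter_def barycentric_vertices)
qed

theorem proposition4p1:
  fixes A B C I HA HB HC N :: point
  assumes "nondegenerate_triangle A B C"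
    and "I = incenter A B C"
    and "is_orthocenter HA B I C"
    and "is_orthocenter HB C I A"
    and "is_orthocenter HC A I B"
    and "is_nagel_point N A B C"
  shows "is_orthocenter N A HB HC \<and> is_orthocenter N B HC HA \<and> is_orthocenter N C HA HB"
proof -
  define a b c where "a = dist B C" and "b = dist C A" and "c = dist A B"
  have ABC: "\<not> collinear {A, B, C}"
    using assms(1) by (simp add: nondegenerate_triangle_def)
  then have BCA: "\<not> collinear {B, C, A}" and CAB: "\<not> collinear {C, A, B}"
    by (simp_all add: insert_commute)
  have "incenter B C A = I" "incenter C A B = I"
    unfolding assms(2) by (simp_all add: incenter_def Let_def dist_commute algebra_simps)
  have "HA = barycentric a (c - a) (b - a) A B C"
    using is_orthocenter_incenter_side_eq[OF ABC] assms(2,3) by (simp add: a_def b_def c_def)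
  moreover have "HB = barycentric (c - b) b (a - b) A B C"
    using is_orthocenter_incenter_side_eq[OF BCA] assms(4) \<open>incenter B C A = I\<close>
    by (simp add: barycentric_rotate[of _ _ _ A B C] a_def b_def c_def)
  moreover have "HC = barycentric (b - c) (a - c) c A B C"
    using is_orthocenter_incenter_side_eq[OF CAB] assms(5) \<open>incenter C A B = I\<close>
    by (simp add: barycentric_rotate[of _ _ _ C A B] a_def b_def c_def)
  moreover have "N = barycentric (b + c - a) (c + a - b) (a + b - c) A B C"
    using is_nagel_point_eq_barycentric[OF ABC assms(6)] by (simp add: a_def b_def c_def)
  ultimately show ?thesis
    using is_orthocenter_nagel_barycentric[OF ABC] by (simp add: a_def b_def c_def)
qed

end
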